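(* Let $R$ be a unital associative superalgebra over $\Bbbk$ and $n\geqslant 2$. Then the Lie superalgebra $\mathfrak{sq}_n(R)$ is perfect, i.e. $[\mathfrak{sq}_n(R),\mathfrak{sq}_n(R)]=\mathfrak{sq}_n(R)$, and $$\mathfrak{sq}_n(R)=\left\{\begin{pmatrix}A&B\\\rho(B)&\rho(A)\end{pmatrix}: A,B\in\mathrm{M}_n(R),\ \mathrm{Tr}(B)\in[R,R]\right\}.$$
   Context: $\Bbbk$ is a unital commutative associative ring in which $2$ is invertible; $|x|$ denotes parity. $[R,R]$ is the $\Bbbk$-span of super-commutators $ab-(-1)^{|a||b|}ba$ of homogeneous $a,b\in R$. $\mathfrak{gl}_{n|n}(R)$ is the Lie superalgebra of $2n\times 2n$ matrices over $R$ with the matrix unit $e_{ij}(a)$ of parity $|i|+|j|+|a|$ ($|i|=0$ for $i\leqslant n$, $|i|=1$ for $i>n$) and bracket $[X,Y]=XY-(-1)^{|X||Y|}YX$. For homogeneous $a\in R$, $\rho(a)=(-1)^{|a|}a$ (extended linearly), applied entrywise to matrices. $\mathfrak{q}_n(R)=\left\{\begin{pmatrix}A&B\\\rho(B)&\rho(A)\end{pmatrix}: A,B\in \mathrm{M}_n(R)\right\}\subseteq\mathfrak{gl}_{n|n}(R)$ and $\mathfrak{sq}_n(R)=[\mathfrak{q}_n(R),\mathfrak{q}_n(R)]$. *)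

theory Defs
  imports Main
begin

(* A unital associative superalgebra R over a commutative ring k (with 2 invertible):
   the carrier is the type 'r (a ring with 1), sm is the k-action,
   R0 / R1 are the even / odd components. *)
definition superalg :: "('k::comm_ring_1 \<Rightarrow> 'r::ring_1 \<Rightarrow> 'r) \<Rightarrow> 'r set \<Rightarrow> 'r set \<Rightarrow> bool" where
  "superalg sm R0 R1 \<longleftrightarrow>
     (\<exists>h::'k. 2 * h = 1) \<and>
     (\<forall>c a b. sm c (a + b) = sm c a + sm c b) \<and>
     (\<forall>c d a. sm (c + d) a = sm c a + sm d a) \<and>
     (\<forall>c d a. sm (c * d) a = sm c (sm d a)) \<and>
     (\<forall>a. sm 1 a = a) \<and>
     (\<forall>c a b. sm c (a * b) = sm c a * b \<and> sm c (a * b) = a * sm c b) \<and>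
     (\<forall>S\<in>{R0, R1}. 0 \<in> S \<and> (\<forall>a\<in>S. \<forall>b\<in>S. a + b \<in> S) \<and> (\<forall>c. \<forall>a\<in>S. sm c a \<in> S)) \<and>
     R0 \<inter> R1 = {0} \<and>
     (\<forall>a. \<exists>a0\<in>R0. \<exists>a1\<in>R1. a = a0 + a1) \<and>
     1 \<in> R0 \<and>
     (\<forall>a\<in>R0. \<forall>b\<in>R0. a * b \<in> R0) \<and>
     (\<forall>a\<in>R0. \<forall>b\<in>R1. a * b \<in> R1) \<and>
     (\<forall>a\<in>R1. \<forall>b\<in>R0. a * b \<in> R1) \<and>
     (\<forall>a\<in>R1. \<forall>b\<in>R1. a * b \<in> R0)"

definition hom :: "'r set \<Rightarrow> 'r set \<Rightarrow> bool \<Rightarrow> 'r \<Rightarrow> bool" where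
  "hom R0 R1 p a \<longleftrightarrow> a \<in> (if p then R1 else R0)"

definition rho :: "'r::ring_1 set \<Rightarrow> 'r set \<Rightarrow> 'r \<Rightarrow> 'r" where
  "rho R0 R1 a = (THE b. \<exists>a0\<in>R0. \<exists>a1\<in>R1. a = a0 + a1 \<and> b = a0 - a1)"

definition scomm :: "bool \<Rightarrow> bool \<Rightarrow> 'r::ring_1 \<Rightarrow> 'r \<Rightarrow> 'r" where
  "scomm p q a b = (if p \<and> q then a * b + b * a else a * b - b * a)"

definition kspan :: "('k \<Rightarrow> 'r::ring_1 \<Rightarrow> 'r) \<Rightarrow> 'r set \<Rightarrow> 'r set" where
  "kspan sm S = {x. \<exists>(m::nat) c v. (\<forall>t<m. v t \<in> S) \<and> x = (\<Sum>t<m. sm (c t) (v t))}"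

definition commR :: "('k \<Rightarrow> 'r::ring_1 \<Rightarrow> 'r) \<Rightarrow> 'r set \<Rightarrow> 'r set \<Rightarrow> 'r set" where
  "commR sm R0 R1 = kspan sm {scomm p q a b | p q a b. hom R0 R1 p a \<and> hom R0 R1 q b}"

(* Matrices in gl_{n|n}(R): functions nat => nat => 'r, indices 0..<2n,
   zero outside; index i has parity (n <= i). *)
type_synonym 'r mat = "nat \<Rightarrow> nat \<Rightarrow> 'r"

definition gl :: "nat \<Rightarrow> 'r::ring_1 mat set" where
  "gl n = {X. \<forall>i j. (2 * n \<le> i \<or> 2 * n \<le> j) \<longrightarrow> X i j = 0}"

definition mmul :: "nat \<Rightarrow> 'r::ring_1 mat \<Rightarrow> 'r mat \<Rightarrow> 'r mat" where
  "mmul n X Y = (\<lambda>i j. \<Sum>k<2 * n. X i k * Y k j)"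

definition mhom :: "'r set \<Rightarrow> 'r set \<Rightarrow> nat \<Rightarrow> bool \<Rightarrow> 'r::ring_1 mat \<Rightarrow> bool" where
  "mhom R0 R1 n p X \<longleftrightarrow> X \<in> gl n \<and>
     (\<forall>i<2 * n. \<forall>j<2 * n. hom R0 R1 (p \<noteq> ((n \<le> i) \<noteq> (n \<le> j))) (X i j))"

definition mbr :: "nat \<Rightarrow> bool \<Rightarrow> bool \<Rightarrow> 'r::ring_1 mat \<Rightarrow> 'r mat \<Rightarrow> 'r mat" where
  "mbr n p q X Y = (\<lambda>i j. if p \<and> q then mmul n X Y i j + mmul n Y X i j
                            else mmul n X Y i j - mmul n Y X i j)"

definition mspan :: "('k \<Rightarrow> 'r::ring_1 \<Rightarrow> 'r) \<Rightarrow> 'r mat set \<Rightarrow> 'r mat set" where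
  "mspan sm S = {X. \<exists>(m::nat) c V. (\<forall>t<m. V t \<in> S) \<and>
                     (\<forall>i j. X i j = (\<Sum>t<m. sm (c t) (V t i j)))}"

definition derived :: "('k \<Rightarrow> 'r::ring_1 \<Rightarrow> 'r) \<Rightarrow> 'r set \<Rightarrow> 'r set \<Rightarrow> nat \<Rightarrow> 'r mat set \<Rightarrow> 'r mat set" where
  "derived sm R0 R1 n L = mspan sm {mbr n p q X Y | p q X Y.
       X \<in> L \<and> Y \<in> L \<and> mhom R0 R1 n p X \<and> mhom R0 R1 n q Y}"

(* q_n(R): matrices (A B; rho B  rho A) *)
definition qn :: "'r set \<Rightarrow> 'r set \<Rightarrow> nat \<Rightarrow> 'r::ring_1 mat set" where
  "qn R0 R1 n = {X \<in> gl n. \<forall>i<n. \<forall>j<n.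
       X (i + n) (j + n) = rho R0 R1 (X i j) \<and> X (i + n) j = rho R0 R1 (X i (j + n))}"

definition sqn :: "('k \<Rightarrow> 'r::ring_1 \<Rightarrow> 'r) \<Rightarrow> 'r set \<Rightarrow> 'r set \<Rightarrow> nat \<Rightarrow> 'r mat set" where
  "sqn sm R0 R1 n = derived sm R0 R1 n (qn R0 R1 n)"

end

theory Submission
  imports Defs "HOL-Library.Function_Algebras"
begin

text \<open>Write elements of \<open>\<mathfrak>q\<^sub>n(R)\<close> as block matrices \<open>(A, B)\<close>. The bracket of two
  homogeneous elements of \<open>\<mathfrak>q\<^sub>n(R)\<close> lies in \<open>\<mathfrak>q\<^sub>n(R)\<close>, and after exchanging the
  two summation indices the trace of its \<open>B\<close>-block regroups into a sum of super-commutators of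
  entries, so \<open>\<mathfrak>sq\<^sub>n(R)\<close> lies in the set \<open>S = sq_explicit n\<close> of the theorem.
  Conversely, for \<open>n \<ge> 2\<close> the set \<open>S\<close> is spanned by the units \<open>a e\<^sub>i\<^sub>j\<close> in the
  \<open>A\<close>-block, the off-diagonal units and the differences \<open>a (e\<^sub>i\<^sub>i - e\<^sub>j\<^sub>j)\<close> in the \<open>B\<close>-block,
  and \<open>[a, b] e\<^sub>1\<^sub>1\<close> in the \<open>B\<close>-block. Using a second index \<open>j \<noteq> i\<close>, each of these is a
  bracket of two elements of \<open>S\<close>, up to the invertible factor 2 and to differences of the
  previous kind. Hence
  \<open>S \<subseteq> [S, S] \<subseteq> [\<mathfrak>q\<^sub>n(R), \<mathfrak>q\<^sub>n(R)] \<subseteq> S\<close>.\<close>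

lemma sum_lessThan_add_nat:
  fixes f :: "nat \<Rightarrow> 'a::comm_monoid_add"
  shows "(\<Sum>t<m + k. f t) = (\<Sum>t<m. f t) + (\<Sum>t<k. f (m + t))"
  by (induction k) (simp_all add: add.assoc)

lemma sum_lessThan_double:
  fixes f :: "nat \<Rightarrow> 'a::comm_monoid_add"
  shows "(\<Sum>k<2 * n. f k) = (\<Sum>k<n. f k) + (\<Sum>k<n. f (k + n))"
  using sum_lessThan_add_nat[of f n n] by (simp add: mult_2 add.commute)

lemma sum_fun_apply: "(\<Sum>t\<in>T. f t) x = (\<Sum>t\<in>T. f t x)"
  by (induction T rule: infinite_finite_induct) simp_all

lemma sum_delta_shift:
  "(\<Sum>j<(n::nat). if l = j + v then g j else 0) =
   (if v \<le> l \<and> l < n + v then g (l - v) else (0::'a::comm_monoid_add))"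
proof (cases "v \<le> l")
  case True
  have "(\<Sum>j<n. if l = j + v then g j else 0) = (\<Sum>j<n. if j = l - v then g j else 0)"
    by (intro sum.cong) (use True in auto)
  also have "\<dots> = (if l - v < n then g (l - v) else 0)" by (simp add: sum.delta)
  finally show ?thesis using True by auto
qed (auto intro!: sum.neutral)

lemma sum_sum_delta_shift:
  "(\<Sum>i<(n::nat). \<Sum>j<n. if k = i + u \<and> l = j + v then f i j else 0) =
   (if u \<le> k \<and> k < n + u \<and> v \<le> l \<and> l < n + v then f (k - u) (l - v)
    else (0::'a::comm_monoid_add))"
proof -
  have "(\<Sum>i<n. \<Sum>j<n. if k = i + u \<and> l = j + v then f i j else 0) =
        (\<Sum>i<n. if k = i + u then (\<Sum>j<n. if l = j + v then f i j else 0) else 0)"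
    by (intro sum.cong) auto
  also have "\<dots> = (\<Sum>i<n. if k = i + u then (if v \<le> l \<and> l < n + v then f i (l - v) else 0) else 0)"
    by (simp only: sum_delta_shift)
  also have "\<dots> = (if u \<le> k \<and> k < n + u then (if v \<le> l \<and> l < n + v then f (k - u) (l - v) else 0) else 0)"
    by (rule sum_delta_shift)
  finally show ?thesis by simp
qed

lemma kspanE:
  assumes "x \<in> kspan act S"
  obtains m c v where "\<forall>t<(m::nat). v t \<in> S" "x = (\<Sum>t<m. act (c t) (v t))"
  using assms unfolding kspan_def by blast

lemma kspanI:
  "\<forall>t<(m::nat). v t \<in> S \<Longrightarrow> x = (\<Sum>t<m. act (c t) (v t)) \<Longrightarrow> x \<in> kspan act S"
  unfolding kspan_def by blast

lemma kspan_zero: "0 \<in> kspan act S"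
  unfolding kspan_def by (intro CollectI exI[of _ 0]) simp

lemma kspan_add:
  assumes "x \<in> kspan act S" "y \<in> kspan act S"
  shows "x + y \<in> kspan act S"
proof -
  obtain m c v where v: "\<forall>t<(m::nat). v t \<in> S" and x: "x = (\<Sum>t<m. act (c t) (v t))"
    using assms(1) by (rule kspanE)
  obtain m' c' v' where v': "\<forall>t<(m'::nat). v' t \<in> S" and y: "y = (\<Sum>t<m'. act (c' t) (v' t))"
    using assms(2) by (rule kspanE)
  define d where "d t = (if t < m then c t else c' (t - m))" for t
  define w where "w t = (if t < m then v t else v' (t - m))" for t
  have "\<forall>t<m + m'. w t \<in> S" using v v' by (simp add: w_def)
  moreover have "x + y = (\<Sum>t<m + m'. act (d t) (w t))"
    unfolding sum_lessThan_add_nat x y d_def w_def by simp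
  ultimately show ?thesis by (rule kspanI)
qed

lemma kspan_sum: "(\<And>t. t \<in> T \<Longrightarrow> f t \<in> kspan act S) \<Longrightarrow> (\<Sum>t\<in>T. f t) \<in> kspan act S"
  by (induction T rule: infinite_finite_induct) (simp_all add: kspan_zero kspan_add)

lemma kspan_mono: "S \<subseteq> T \<Longrightarrow> kspan act S \<subseteq> kspan act T"
  unfolding kspan_def by blast

lemma kspan_least:
  assumes "S \<subseteq> M" "0 \<in> M" "\<And>x y. x \<in> M \<Longrightarrow> y \<in> M \<Longrightarrow> x + y \<in> M"
    and "\<And>c x. x \<in> M \<Longrightarrow> act c x \<in> M"
  shows "kspan act S \<subseteq> M"
proof
  fix x assume "x \<in> kspan act S"
  then obtain m c v where v: "\<forall>t<(m::nat). v t \<in> S" and x: "x = (\<Sum>t<m. act (c t) (v t))"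
    by (rule kspanE)
  have "(\<Sum>t\<in>T. act (c t) (v t)) \<in> M" if "T \<subseteq> {..<m}" for T
    using that by (induction T rule: infinite_finite_induct) (use assms v in auto)
  then show "x \<in> M" unfolding x by blast
qed

locale scalar_action =
  fixes act :: "'k::comm_ring_1 \<Rightarrow> 'a::ring_1 \<Rightarrow> 'a"
  assumes act_add: "act c (x + y) = act c x + act c y"
    and act_add_scalar: "act (c + d) x = act c x + act d x"
    and act_mult_scalar: "act (c * d) x = act c (act d x)"
    and act_one [simp]: "act 1 x = x"
begin

lemma act_zero [simp]: "act c 0 = 0"
  using act_add[of c 0 0] by simp

lemma act_zero_scalar [simp]: "act 0 x = 0"
  using act_add_scalar[of 0 0 x] by simp

lemma act_minus_one: "act (- 1) x = - x"
  using act_add_scalar[of "- 1" 1 x] by (simp add: add_eq_0_iff2)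

lemma act_uminus: "act c (- x) = - act c x"
  using act_add[of c x "- x"] by (simp add: add_eq_0_iff)

lemma act_diff: "act c (x - y) = act c x - act c y"
  using act_add[of c x "- y"] by (simp add: act_uminus)

lemma act_sum: "act c (\<Sum>t\<in>T. f t) = (\<Sum>t\<in>T. act c (f t))"
  by (induction T rule: infinite_finite_induct) (simp_all add: act_add)

lemma kspan_base: "x \<in> S \<Longrightarrow> x \<in> kspan act S"
  by (rule kspanI[where m = 1 and v = "\<lambda>_. x" and c = "\<lambda>_. 1"]) simp_all

lemma kspan_act:
  assumes "x \<in> kspan act S"
  shows "act c x \<in> kspan act S"
proof -
  obtain m d v where v: "\<forall>t<(m::nat). v t \<in> S" and x: "x = (\<Sum>t<m. act (d t) (v t))"
    using assms by (rule kspanE)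
  have "act c x = (\<Sum>t<m. act c (act (d t) (v t)))"
    unfolding x by (rule act_sum)
  also have "\<dots> = (\<Sum>t<m. act (c * d t) (v t))"
    by (simp only: act_mult_scalar)
  finally have "act c x = (\<Sum>t<m. act (c * d t) (v t))" .
  with v show ?thesis by (rule kspanI)
qed

lemma kspan_uminus: "x \<in> kspan act S \<Longrightarrow> - x \<in> kspan act S"
  using kspan_act[of x S "- 1"] by (simp add: act_minus_one)

lemma kspan_diff: "x \<in> kspan act S \<Longrightarrow> y \<in> kspan act S \<Longrightarrow> x - y \<in> kspan act S"
  unfolding diff_conv_add_uminus by (intro kspan_add kspan_uminus)

lemma kspan_half:
  fixes h :: 'k
  assumes "2 * h = 1" "x + x \<in> kspan act S"
  shows "x \<in> kspan act S"
proof -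
  have "act h (x + x) = act (h + h) x" by (simp only: act_add act_add_scalar)
  also have "h + h = 1" using assms(1) by (simp add: mult_2[symmetric])
  finally show ?thesis using kspan_act[OF assms(2), of h] by simp
qed

end

definition mat_act :: "('k \<Rightarrow> 'r \<Rightarrow> 'r) \<Rightarrow> 'k \<Rightarrow> 'r mat \<Rightarrow> 'r mat" where
  "mat_act sm c X = (\<lambda>i j. sm c (X i j))"

lemma mspan_eq_kspan: "mspan sm S = kspan (mat_act sm) S"
  by (auto simp: mspan_def kspan_def mat_act_def sum_fun_apply fun_eq_iff)

section \<open>The parity involution \<open>\<rho>\<close>\<close>

locale superalgebra =
  fixes sm :: "'k::comm_ring_1 \<Rightarrow> 'r::ring_1 \<Rightarrow> 'r" and R0 R1 :: "'r set"
  assumes superalg: "superalg sm R0 R1"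
begin

lemma two_invertible: "\<exists>h::'k. 2 * h = 1"
  using superalg unfolding superalg_def by blast

sublocale scalar_action sm
  by unfold_locales (use superalg in \<open>simp_all add: superalg_def\<close>)

sublocale mat: scalar_action "mat_act sm"
  by unfold_locales (simp_all add: mat_act_def fun_eq_iff act_add act_add_scalar act_mult_scalar)

lemma R0_zero [simp]: "0 \<in> R0"
  and R1_zero [simp]: "0 \<in> R1"
  and R0_add: "a \<in> R0 \<Longrightarrow> b \<in> R0 \<Longrightarrow> a + b \<in> R0"
  and R1_add: "a \<in> R1 \<Longrightarrow> b \<in> R1 \<Longrightarrow> a + b \<in> R1"
  and R0_sm: "a \<in> R0 \<Longrightarrow> sm c a \<in> R0"
  and R1_sm: "a \<in> R1 \<Longrightarrow> sm c a \<in> R1"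
  using superalg unfolding superalg_def by simp_all

lemma R0_Int_R1: "R0 \<inter> R1 = {0}"
  and R0_R1_decomp: "\<exists>a0\<in>R0. \<exists>a1\<in>R1. a = a0 + a1"
  and R0_one [simp]: "1 \<in> R0"
  and R0_mult_R0: "a \<in> R0 \<Longrightarrow> b \<in> R0 \<Longrightarrow> a * b \<in> R0"
  and R0_mult_R1: "a \<in> R0 \<Longrightarrow> b \<in> R1 \<Longrightarrow> a * b \<in> R1"
  and R1_mult_R0: "a \<in> R1 \<Longrightarrow> b \<in> R0 \<Longrightarrow> a * b \<in> R1"
  and R1_mult_R1: "a \<in> R1 \<Longrightarrow> b \<in> R1 \<Longrightarrow> a * b \<in> R0"
  using superalg unfolding superalg_def by simp_all

lemma R0_uminus: "a \<in> R0 \<Longrightarrow> - a \<in> R0"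
  using R0_sm[of a "- 1"] by (simp add: act_minus_one)

lemma R1_uminus: "a \<in> R1 \<Longrightarrow> - a \<in> R1"
  using R1_sm[of a "- 1"] by (simp add: act_minus_one)

lemma R0_diff: "a \<in> R0 \<Longrightarrow> b \<in> R0 \<Longrightarrow> a - b \<in> R0"
  unfolding diff_conv_add_uminus by (intro R0_add R0_uminus)

lemma R1_diff: "a \<in> R1 \<Longrightarrow> b \<in> R1 \<Longrightarrow> a - b \<in> R1"
  unfolding diff_conv_add_uminus by (intro R1_add R1_uminus)

lemma R0_R1_decomp_unique:
  assumes "a0 \<in> R0" "a1 \<in> R1" "b0 \<in> R0" "b1 \<in> R1" "a0 + a1 = b0 + b1"
  shows "a0 = b0" "a1 = b1"
proof -
  have "a0 - b0 = b1 - a1" using assms(5) by (simp add: algebra_simps)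
  then have "a0 - b0 \<in> R0 \<inter> R1"
    using R0_diff[OF assms(1,3)] R1_diff[OF assms(4,2)] by (metis IntI)
  then show "a0 = b0" using R0_Int_R1 by simp
  with assms(5) show "a1 = b1" by simp
qed

abbreviation \<rho> :: "'r \<Rightarrow> 'r" where "\<rho> \<equiv> rho R0 R1"

lemma rho_decomp: "a0 \<in> R0 \<Longrightarrow> a1 \<in> R1 \<Longrightarrow> \<rho> (a0 + a1) = a0 - a1"
  unfolding rho_def by (rule the_equality) (use R0_R1_decomp_unique in blast)+

lemma rho_R0: "a \<in> R0 \<Longrightarrow> \<rho> a = a"
  using rho_decomp[of a 0] by simp

lemma rho_R1: "a \<in> R1 \<Longrightarrow> \<rho> a = - a"
  using rho_decomp[of 0 a] by simp

lemma rho_hom: "hom R0 R1 p a \<Longrightarrow> \<rho> a = (if p then - a else a)"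
  by (simp add: hom_def rho_R0 rho_R1 split: if_splits)

lemma hom_decomp: "\<exists>a0 a1. hom R0 R1 False a0 \<and> hom R0 R1 True a1 \<and> a = a0 + a1"
  using R0_R1_decomp[of a] by (auto simp: hom_def)

lemma hom_zero [simp]: "hom R0 R1 p 0"
  by (simp add: hom_def)

lemma hom_one: "hom R0 R1 False 1"
  by (simp add: hom_def)

lemma hom_rho: "hom R0 R1 p a \<Longrightarrow> hom R0 R1 p (\<rho> a)"
  by (auto simp: rho_hom hom_def R0_uminus R1_uminus)

lemma rho_zero [simp]: "\<rho> 0 = 0"
  and rho_one [simp]: "\<rho> 1 = 1"
  by (simp_all add: rho_R0)

lemma rho_add: "\<rho> (a + b) = \<rho> a + \<rho> b"
proof -
  obtain a0 a1 b0 b1 where h: "a0 \<in> R0" "a1 \<in> R1" "a = a0 + a1" "b0 \<in> R0" "b1 \<in> R1" "b = b0 + b1"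
    using R0_R1_decomp by meson
  have "a + b = (a0 + b0) + (a1 + b1)" using h by (simp add: algebra_simps)
  then have "\<rho> (a + b) = (a0 + b0) - (a1 + b1)"
    by (simp add: rho_decomp R0_add R1_add h(1,2,4,5))
  moreover have "\<rho> a = a0 - a1" "\<rho> b = b0 - b1"
    by (simp_all add: rho_decomp h)
  ultimately show ?thesis by (simp only:) (simp add: algebra_simps)
qed

lemma rho_mult: "\<rho> (a * b) = \<rho> a * \<rho> b"
proof -
  obtain a0 a1 b0 b1 where h: "a0 \<in> R0" "a1 \<in> R1" "a = a0 + a1" "b0 \<in> R0" "b1 \<in> R1" "b = b0 + b1"
    using R0_R1_decomp by meson
  have "a * b = (a0 * b0 + a1 * b1) + (a0 * b1 + a1 * b0)"
    using h by (simp add: algebra_simps)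
  then have "\<rho> (a * b) = (a0 * b0 + a1 * b1) - (a0 * b1 + a1 * b0)"
    by (simp add: rho_decomp R0_add R1_add R0_mult_R0 R0_mult_R1 R1_mult_R0 R1_mult_R1 h(1,2,4,5))
  moreover have "\<rho> a = a0 - a1" "\<rho> b = b0 - b1"
    by (simp_all add: rho_decomp h)
  ultimately show ?thesis by (simp only:) (simp add: algebra_simps)
qed

lemma rho_sm: "\<rho> (sm c a) = sm c (\<rho> a)"
proof -
  obtain a0 a1 where "a0 \<in> R0" "a1 \<in> R1" "a = a0 + a1"
    using R0_R1_decomp by meson
  then show ?thesis by (simp add: act_add act_diff rho_decomp R0_sm R1_sm)
qed

lemma rho_rho [simp]: "\<rho> (\<rho> a) = a"
proof -
  obtain a0 a1 where "a0 \<in> R0" "a1 \<in> R1" "a = a0 + a1"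
    using R0_R1_decomp by meson
  moreover from this have "\<rho> a = a0 + (- a1)" by (simp add: rho_decomp)
  moreover from calculation have "\<rho> (a0 + (- a1)) = a0 - (- a1)"
    by (intro rho_decomp R1_uminus)
  ultimately show ?thesis by (simp only:) simp
qed

lemma rho_uminus: "\<rho> (- a) = - \<rho> a"
proof -
  have "\<rho> a + \<rho> (- a) = 0" using rho_add[of a "- a"] by simp
  then show ?thesis by (simp add: add_eq_0_iff)
qed

lemma rho_diff: "\<rho> (a - b) = \<rho> a - \<rho> b"
  using rho_add[of a "- b"] by (simp add: rho_uminus)

lemma rho_sum: "\<rho> (\<Sum>t\<in>T. f t) = (\<Sum>t\<in>T. \<rho> (f t))"
  by (induction T rule: infinite_finite_induct) (simp_all add: rho_add)

lemma additive_from_homogeneous: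
  assumes additive: "\<And>a b. f (a + b) = f a + f b"
    and closed: "\<And>x y. x \<in> M \<Longrightarrow> y \<in> M \<Longrightarrow> x + y \<in> M"
    and homogeneous: "\<And>p b. hom R0 R1 p b \<Longrightarrow> f b \<in> M"
  shows "f a \<in> M"
proof -
  obtain a0 a1 where "hom R0 R1 False a0" "hom R0 R1 True a1" "a = a0 + a1"
    using hom_decomp by blast
  then show ?thesis using closed[OF homogeneous homogeneous] by (simp add: additive)
qed

end

section \<open>Matrix units of \<open>\<mathfrak>q\<^sub>n(R)\<close>\<close>

definition em :: "nat \<Rightarrow> nat \<Rightarrow> 'r::zero \<Rightarrow> 'r mat" where
  "em i j a = (\<lambda>k l. if k = i \<and> l = j then a else 0)"

lemma em_zero [simp]: "em i j 0 = 0"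
  by (simp add: em_def fun_eq_iff)

lemma em_add: "em i j (a + b) = em i j a + em i j b" for a b :: "'a::monoid_add"
  by (simp add: em_def fun_eq_iff)

lemma em_uminus: "em i j (- a) = - em i j a" for a :: "'a::group_add"
  by (simp add: em_def fun_eq_iff)

lemma mmul_em:
  assumes "j < 2 * n"
  shows "mmul n (em i j a) (em k l b) = (if j = k then em i l (a * b) else 0)"
proof (intro ext)
  fix x y
  have "mmul n (em i j a) (em k l b) x y =
        (\<Sum>m<2 * n. if m = j then (if x = i \<and> j = k \<and> y = l then a * b else 0) else 0)"
    unfolding mmul_def by (intro sum.cong) (auto simp: em_def)
  with assms show "mmul n (em i j a) (em k l b) x y = (if j = k then em i l (a * b) else 0) x y"
    by (simp add: em_def)
qed

lemma mmul_add_left: "mmul n (X + Y) Z = mmul n X Z + mmul n Y Z"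
  and mmul_add_right: "mmul n Z (X + Y) = mmul n Z X + mmul n Z Y"
  and mmul_diff_left: "mmul n (X - Y) Z = mmul n X Z - mmul n Y Z"
  and mmul_diff_right: "mmul n Z (X - Y) = mmul n Z X - mmul n Z Y"
  and mmul_uminus_left: "mmul n (- X) Z = - mmul n X Z"
  and mmul_uminus_right: "mmul n Z (- X) = - mmul n Z X"
  by (simp_all add: mmul_def fun_eq_iff algebra_simps sum.distrib sum_subtractf sum_negf)

lemma mbr_eq: "mbr n p q X Y = (if p \<and> q then mmul n X Y + mmul n Y X else mmul n X Y - mmul n Y X)"
  by (intro ext) (simp add: mbr_def)

lemmas mmul_linear =
  mmul_add_left mmul_add_right mmul_diff_left mmul_diff_right mmul_uminus_left mmul_uminus_right

definition qtr :: "nat \<Rightarrow> 'r::comm_monoid_add mat \<Rightarrow> 'r" where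
  "qtr n X = (\<Sum>i<n. X i (i + n))"

lemma qtr_zero [simp]: "qtr n 0 = 0"
  by (simp add: qtr_def)

lemma qtr_add: "qtr n (X + Y) = qtr n X + qtr n Y"
  by (simp add: qtr_def sum.distrib)

lemma qtr_diff: "qtr n (X - Y) = qtr n X - qtr n Y" for X Y :: "'r::ab_group_add mat"
  by (simp add: qtr_def sum_subtractf)

context superalgebra
begin

lemma derived_eq_kspan:
  "derived sm R0 R1 n L =
     kspan (mat_act sm) {mbr n p q X Y | p q X Y. X \<in> L \<and> Y \<in> L \<and> mhom R0 R1 n p X \<and> mhom R0 R1 n q Y}"
  by (simp add: derived_def mspan_eq_kspan)

lemma derived_mono: "L \<subseteq> L' \<Longrightarrow> derived sm R0 R1 n L \<subseteq> derived sm R0 R1 n L'"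
  unfolding derived_eq_kspan by (rule kspan_mono) blast

lemma mbr_in_derived:
  "X \<in> L \<Longrightarrow> Y \<in> L \<Longrightarrow> mhom R0 R1 n p X \<Longrightarrow> mhom R0 R1 n q Y \<Longrightarrow>
   mbr n p q X Y \<in> derived sm R0 R1 n L"
  unfolding derived_eq_kspan by (rule mat.kspan_base) blast

lemma derived_add: "X \<in> derived sm R0 R1 n L \<Longrightarrow> Y \<in> derived sm R0 R1 n L \<Longrightarrow> X + Y \<in> derived sm R0 R1 n L"
  and derived_diff: "X \<in> derived sm R0 R1 n L \<Longrightarrow> Y \<in> derived sm R0 R1 n L \<Longrightarrow> X - Y \<in> derived sm R0 R1 n L"
  and derived_mat_act: "X \<in> derived sm R0 R1 n L \<Longrightarrow> mat_act sm c X \<in> derived sm R0 R1 n L"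
  unfolding derived_eq_kspan by (simp_all add: kspan_add mat.kspan_diff mat.kspan_act)

lemma derived_zero: "0 \<in> derived sm R0 R1 n L"
  unfolding derived_eq_kspan by (rule kspan_zero)

lemma derived_sum: "(\<And>t. t \<in> T \<Longrightarrow> f t \<in> derived sm R0 R1 n L) \<Longrightarrow> (\<Sum>t\<in>T. f t) \<in> derived sm R0 R1 n L"
  unfolding derived_eq_kspan by (rule kspan_sum)

lemma derived_half: "X + X \<in> derived sm R0 R1 n L \<Longrightarrow> X \<in> derived sm R0 R1 n L"
  using two_invertible mat.kspan_half unfolding derived_eq_kspan by blast

lemma qtr_mat_act: "qtr n (mat_act sm c X) = sm c (qtr n X)"
  by (simp add: qtr_def mat_act_def act_sum)

text \<open>\<open>qA n i j a\<close> and \<open>qB n i j a\<close> are the elements of \<open>\<mathfrak>q\<^sub>n(R)\<close> with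
  \<open>(A, B) = (a e\<^sub>i\<^sub>j, 0)\<close> and \<open>(A, B) = (0, a e\<^sub>i\<^sub>j)\<close> respectively.\<close>

definition qA :: "nat \<Rightarrow> nat \<Rightarrow> nat \<Rightarrow> 'r \<Rightarrow> 'r mat" where
  "qA n i j a = em i j a + em (i + n) (j + n) (\<rho> a)"

definition qB :: "nat \<Rightarrow> nat \<Rightarrow> nat \<Rightarrow> 'r \<Rightarrow> 'r mat" where
  "qB n i j a = em i (j + n) a + em (i + n) j (\<rho> a)"

lemma qA_apply:
  "qA n i j a k l = (if k = i \<and> l = j then a else 0) + (if k = i + n \<and> l = j + n then \<rho> a else 0)"
  by (simp add: qA_def em_def)

lemma qB_apply:
  "qB n i j a k l = (if k = i \<and> l = j + n then a else 0) + (if k = i + n \<and> l = j then \<rho> a else 0)"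
  by (simp add: qB_def em_def)

lemma qA_add: "qA n i j (a + b) = qA n i j a + qA n i j b"
  by (simp add: qA_def em_add rho_add)

lemma qB_add: "qB n i j (a + b) = qB n i j a + qB n i j b"
  by (simp add: qB_def em_add rho_add)

lemma qB_diff: "qB n i j (a - b) = qB n i j a - qB n i j b"
  by (simp add: qB_def em_def fun_eq_iff rho_diff)

lemma qB_zero [simp]: "qB n i j 0 = 0"
  by (simp add: qB_def)

lemma qB_sum: "qB n i j (\<Sum>t\<in>T. f t) = (\<Sum>t\<in>T. qB n i j (f t))"
  by (induction T rule: infinite_finite_induct) (simp_all add: qB_add)

lemma qB_sm: "qB n i j (sm c a) = mat_act sm c (qB n i j a)"
  by (auto simp: fun_eq_iff qB_apply mat_act_def rho_sm act_add)

lemma qA_mhom: "i < n \<Longrightarrow> j < n \<Longrightarrow> hom R0 R1 p a \<Longrightarrow> mhom R0 R1 n p (qA n i j a)"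
  by (auto simp: mhom_def gl_def qA_apply hom_rho)

lemma qB_mhom: "i < n \<Longrightarrow> j < n \<Longrightarrow> hom R0 R1 p a \<Longrightarrow> mhom R0 R1 n (\<not> p) (qB n i j a)"
  by (auto simp: mhom_def gl_def qB_apply hom_rho)

section \<open>The bracket table of \<open>qA\<close> and \<open>qB\<close>\<close>

lemma mbr_qA_diag_qA:
  assumes "i < n" "j < n" "i \<noteq> j" "hom R0 R1 p a"
  shows "mbr n p False (qA n i i a) (qA n i j 1) = qA n i j a"
  using assms by (simp add: mbr_eq qA_def mmul_linear mmul_em rho_mult)

lemma mbr_qA_qA:
  assumes "i < n" "j < n" "i \<noteq> j" "hom R0 R1 p a"
  shows "mbr n p False (qA n i j a) (qA n j i 1) = qA n i i a - qA n j j a"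
  using assms by (simp add: mbr_eq qA_def mmul_linear mmul_em rho_mult)

lemma mbr_qB_qB:
  assumes "i < n" "j < n" "i \<noteq> j" "hom R0 R1 p a"
  shows "mbr n (\<not> p) True (qB n i j a) (qB n j i 1) = qA n i i a + qA n j j a"
  using assms by (cases p)
    (simp_all add: mbr_eq qA_def qB_def mmul_linear mmul_em rho_mult rho_hom em_uminus algebra_simps)

lemma mbr_qA_diag_qB:
  assumes "i < n" "j < n" "i \<noteq> j" "hom R0 R1 p a"
  shows "mbr n p True (qA n i i a) (qB n i j 1) = qB n i j a"
  using assms by (cases p) (simp_all add: mbr_eq qA_def qB_def mmul_linear mmul_em rho_mult)

lemma mbr_qA_qB:
  assumes "i < n" "j < n" "i \<noteq> j" "hom R0 R1 p a" "hom R0 R1 q b"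
  shows "mbr n p (\<not> q) (qA n i j a) (qB n j i b) =
    (if p \<and> q then qB n i i (a * b) + qB n j j (b * a) else qB n i i (a * b) - qB n j j (b * a))"
  using assms by (cases p; cases q)
    (simp_all add: mbr_eq qA_def qB_def mmul_linear mmul_em rho_mult rho_hom em_uminus algebra_simps)

section \<open>The derived algebra of \<open>\<mathfrak>q\<^sub>n(R)\<close> lies in the explicit set\<close>

lemma qnD:
  assumes "X \<in> qn R0 R1 n"
  shows "X \<in> gl n"
    and "i < n \<Longrightarrow> j < n \<Longrightarrow> X (i + n) (j + n) = \<rho> (X i j)"
    and "i < n \<Longrightarrow> j < n \<Longrightarrow> X (i + n) j = \<rho> (X i (j + n))"
  using assms unfolding qn_def by auto

lemma qn_zero: "0 \<in> qn R0 R1 n"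
  by (simp add: qn_def gl_def)

lemma qn_add: "X \<in> qn R0 R1 n \<Longrightarrow> Y \<in> qn R0 R1 n \<Longrightarrow> X + Y \<in> qn R0 R1 n"
  by (simp add: qn_def gl_def rho_add)

lemma qn_diff: "X \<in> qn R0 R1 n \<Longrightarrow> Y \<in> qn R0 R1 n \<Longrightarrow> X - Y \<in> qn R0 R1 n"
  by (simp add: qn_def gl_def rho_diff)

lemma qn_mat_act: "X \<in> qn R0 R1 n \<Longrightarrow> mat_act sm c X \<in> qn R0 R1 n"
  by (simp add: qn_def gl_def mat_act_def rho_sm)

lemma qA_qn: "i < n \<Longrightarrow> j < n \<Longrightarrow> qA n i j a \<in> qn R0 R1 n"
  by (auto simp: qn_def gl_def qA_apply rho_add)

lemma qB_qn: "i < n \<Longrightarrow> j < n \<Longrightarrow> qB n i j a \<in> qn R0 R1 n"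
  by (auto simp: qn_def gl_def qB_apply rho_add)

lemma mmul_qn:
  assumes X: "X \<in> qn R0 R1 n" and Y: "Y \<in> qn R0 R1 n"
  shows "mmul n X Y \<in> qn R0 R1 n"
proof -
  have "mmul n X Y \<in> gl n" using qnD(1)[OF X] qnD(1)[OF Y] by (simp add: gl_def mmul_def)
  moreover have "mmul n X Y (i + n) (j + n) = \<rho> (mmul n X Y i j)"
    and "mmul n X Y (i + n) j = \<rho> (mmul n X Y i (j + n))" if "i < n" "j < n" for i j
    using that by (simp_all add: mmul_def sum_lessThan_double qnD[OF X] qnD[OF Y] rho_sum rho_add rho_mult)
  ultimately show ?thesis unfolding qn_def by blast
qed

lemma mbr_qn: "X \<in> qn R0 R1 n \<Longrightarrow> Y \<in> qn R0 R1 n \<Longrightarrow> mbr n p q X Y \<in> qn R0 R1 n"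
  by (simp add: mbr_eq qn_add qn_diff mmul_qn)

lemma qtr_mmul_qn:
  assumes "Y \<in> qn R0 R1 n"
  shows "qtr n (mmul n X Y) = (\<Sum>i<n. \<Sum>k<n. X i k * Y k (i + n) + X i (k + n) * \<rho> (Y k i))"
  unfolding qtr_def
proof (intro sum.cong refl)
  fix i assume "i \<in> {..<n}"
  then show "mmul n X Y i (i + n) = (\<Sum>k<n. X i k * Y k (i + n) + X i (k + n) * \<rho> (Y k i))"
    by (simp add: mmul_def sum_lessThan_double qnD[OF assms] sum.distrib)
qed

text \<open>The terms of \<open>qtr n [X, Y]\<close> containing \<open>X i k\<close> or \<open>X i (k + n)\<close>; each of the two
  groups is a super-commutator up to sign.\<close>

definition qtr_mbr_summand :: "bool \<Rightarrow> bool \<Rightarrow> 'r mat \<Rightarrow> 'r mat \<Rightarrow> nat \<Rightarrow> nat \<Rightarrow> nat \<Rightarrow> 'r" where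
  "qtr_mbr_summand p q X Y n i k =
     (if p \<and> q then X i k * Y k (i + n) + Y k (i + n) * \<rho> (X i k)
      else X i k * Y k (i + n) - Y k (i + n) * \<rho> (X i k)) +
     (if p \<and> q then X i (k + n) * \<rho> (Y k i) + Y k i * X i (k + n)
      else X i (k + n) * \<rho> (Y k i) - Y k i * X i (k + n))"

lemma qtr_mbr_qn:
  assumes "X \<in> qn R0 R1 n" "Y \<in> qn R0 R1 n"
  shows "qtr n (mbr n p q X Y) = (\<Sum>i<n. \<Sum>k<n. qtr_mbr_summand p q X Y n i k)"
proof -
  have swap: "qtr n (mmul n Y X) = (\<Sum>i<n. \<Sum>k<n. Y k i * X i (k + n) + Y k (i + n) * \<rho> (X i k))"
    unfolding qtr_mmul_qn[OF assms(1)] by (rule sum.swap)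
  show ?thesis
  proof (cases "p \<and> q")
    case True
    then have "qtr n (mbr n p q X Y) = (\<Sum>i<n. \<Sum>k<n. (X i k * Y k (i + n) + X i (k + n) * \<rho> (Y k i)) +
        (Y k i * X i (k + n) + Y k (i + n) * \<rho> (X i k)))"
      unfolding mbr_eq if_P[OF True] by (simp add: qtr_add qtr_mmul_qn[OF assms(2)] swap sum.distrib)
    also have "\<dots> = (\<Sum>i<n. \<Sum>k<n. qtr_mbr_summand p q X Y n i k)"
      unfolding qtr_mbr_summand_def if_P[OF True] by (simp add: algebra_simps)
    finally show ?thesis .
  next
    case False
    then have "qtr n (mbr n p q X Y) = (\<Sum>i<n. \<Sum>k<n. (X i k * Y k (i + n) + X i (k + n) * \<rho> (Y k i)) -
        (Y k i * X i (k + n) + Y k (i + n) * \<rho> (X i k)))"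
      unfolding mbr_eq if_not_P[OF False] by (simp add: qtr_diff qtr_mmul_qn[OF assms(2)] swap sum_subtractf)
    also have "\<dots> = (\<Sum>i<n. \<Sum>k<n. qtr_mbr_summand p q X Y n i k)"
      unfolding qtr_mbr_summand_def if_not_P[OF False] by (simp add: algebra_simps)
    finally show ?thesis .
  qed
qed

lemma scomm_in_commR: "hom R0 R1 p a \<Longrightarrow> hom R0 R1 q b \<Longrightarrow> scomm p q a b \<in> commR sm R0 R1"
  unfolding commR_def by (rule kspan_base) blast

lemma mult_rho_sum_eq_scomm:
  assumes "hom R0 R1 p a"
  shows "(if p \<and> q then a * d + d * \<rho> a else a * d - d * \<rho> a) = scomm p (\<not> q) a d"
  using assms by (simp add: rho_hom scomm_def)

lemma rho_mult_sum_eq_scomm: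
  assumes "hom R0 R1 q c"
  shows "(if p \<and> q then b * \<rho> c + c * b else b * \<rho> c - c * b) =
    (if q then - scomm (\<not> p) q b c else scomm (\<not> p) q b c)"
  using assms by (simp add: rho_hom scomm_def)

lemma qtr_mbr_summand_in_commR:
  assumes "mhom R0 R1 n p X" "mhom R0 R1 n q Y" "i < n" "k < n"
  shows "qtr_mbr_summand p q X Y n i k \<in> commR sm R0 R1"
proof -
  have X: "hom R0 R1 (p \<noteq> ((n \<le> a) \<noteq> (n \<le> b))) (X a b)"
    and Y: "hom R0 R1 (q \<noteq> ((n \<le> a) \<noteq> (n \<le> b))) (Y a b)" if "a < 2 * n" "b < 2 * n" for a b
    using assms(1,2) that unfolding mhom_def by auto
  have "hom R0 R1 p (X i k)" "hom R0 R1 (\<not> q) (Y k (i + n))"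
    and "hom R0 R1 (\<not> p) (X i (k + n))" "hom R0 R1 q (Y k i)"
    using X[of i k] Y[of k "i + n"] X[of i "k + n"] Y[of k i] assms(3,4) by simp_all
  then have "scomm p (\<not> q) (X i k) (Y k (i + n)) \<in> commR sm R0 R1"
    and "scomm (\<not> p) q (X i (k + n)) (Y k i) \<in> commR sm R0 R1"
    and "qtr_mbr_summand p q X Y n i k = scomm p (\<not> q) (X i k) (Y k (i + n)) +
      (if q then - scomm (\<not> p) q (X i (k + n)) (Y k i) else scomm (\<not> p) q (X i (k + n)) (Y k i))"
    by (simp_all add: scomm_in_commR qtr_mbr_summand_def mult_rho_sum_eq_scomm rho_mult_sum_eq_scomm)
  then show ?thesis by (cases q) (simp_all add: commR_def kspan_add kspan_diff)
qed

lemma qtr_mbr_in_commR: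
  assumes "X \<in> qn R0 R1 n" "Y \<in> qn R0 R1 n" "mhom R0 R1 n p X" "mhom R0 R1 n q Y"
  shows "qtr n (mbr n p q X Y) \<in> commR sm R0 R1"
  unfolding qtr_mbr_qn[OF assms(1,2)] commR_def
  by (intro kspan_sum) (use qtr_mbr_summand_in_commR[OF assms(3,4)] in \<open>simp add: commR_def\<close>)

definition sq_explicit :: "nat \<Rightarrow> 'r mat set" where
  "sq_explicit n = {X \<in> qn R0 R1 n. qtr n X \<in> commR sm R0 R1}"

lemma derived_qn_subset: "derived sm R0 R1 n (qn R0 R1 n) \<subseteq> sq_explicit n"
  unfolding derived_eq_kspan
proof (rule kspan_least)
  show "0 \<in> sq_explicit n"
    and "\<And>X Y. X \<in> sq_explicit n \<Longrightarrow> Y \<in> sq_explicit n \<Longrightarrow> X + Y \<in> sq_explicit n"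
    and "\<And>c X. X \<in> sq_explicit n \<Longrightarrow> mat_act sm c X \<in> sq_explicit n"
    by (simp_all add: sq_explicit_def qn_zero qn_add qn_mat_act qtr_add qtr_mat_act commR_def kspan_zero kspan_add kspan_act)
qed (auto simp: sq_explicit_def mbr_qn qtr_mbr_in_commR)

section \<open>The explicit set is perfect\<close>

lemma qtr_qA: "j < n \<Longrightarrow> qtr n (qA n i j a) = 0"
  by (auto simp: qtr_def qA_apply intro!: sum.neutral)

lemma qtr_qB:
  assumes "i < n" "j < n"
  shows "qtr n (qB n i j a) = (if i = j then a else 0)"
proof -
  have "qtr n (qB n i j a) = (\<Sum>k<n. if k = i then (if i = j then a else 0) else 0)"
    unfolding qtr_def using assms(2) by (intro sum.cong) (auto simp: qB_apply)
  with assms(1) show ?thesis by simp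
qed

lemma qA_sq_explicit: "i < n \<Longrightarrow> j < n \<Longrightarrow> qA n i j a \<in> sq_explicit n"
  by (simp add: sq_explicit_def qA_qn qtr_qA commR_def kspan_zero)

lemma qB_sq_explicit: "i < n \<Longrightarrow> j < n \<Longrightarrow> i \<noteq> j \<Longrightarrow> qB n i j a \<in> sq_explicit n"
  by (simp add: sq_explicit_def qB_qn qtr_qB commR_def kspan_zero)

abbreviation derived_sq :: "nat \<Rightarrow> 'r mat set" where
  "derived_sq n \<equiv> derived sm R0 R1 n (sq_explicit n)"

lemma qA_offdiag_in_derived:
  assumes "i < n" "j < n" "i \<noteq> j"
  shows "qA n i j a \<in> derived_sq n"
proof (rule additive_from_homogeneous[OF qA_add derived_add])
  fix p b assume b: "hom R0 R1 p b"
  have "mbr n p False (qA n i i b) (qA n i j 1) \<in> derived_sq n"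
    using assms b by (intro mbr_in_derived) (simp_all add: qA_sq_explicit qA_mhom hom_one)
  then show "qA n i j b \<in> derived_sq n"
    by (simp add: mbr_qA_diag_qA assms b)
qed

lemma qA_diag_in_derived:
  assumes "i < n" "2 \<le> n"
  shows "qA n i i a \<in> derived_sq n"
proof (rule additive_from_homogeneous[OF qA_add derived_add])
  fix p b assume b: "hom R0 R1 p b"
  define j where "j = (if i = 0 then 1 else 0 :: nat)"
  have j: "j < n" "i \<noteq> j" using assms by (auto simp: j_def)
  have "mbr n (\<not> p) True (qB n i j b) (qB n j i 1) \<in> derived_sq n"
    and "mbr n p False (qA n i j b) (qA n j i 1) \<in> derived_sq n"
    using assms j b
    by (intro mbr_in_derived; simp add: qA_sq_explicit qB_sq_explicit qA_mhom qB_mhom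
        qB_mhom[of _ _ _ False, simplified] hom_one)+
  then have "qA n i i b + qA n j j b \<in> derived_sq n" "qA n i i b - qA n j j b \<in> derived_sq n"
    using assms j b by (simp_all add: mbr_qB_qB mbr_qA_qA)
  then have "(qA n i i b + qA n j j b) + (qA n i i b - qA n j j b) \<in> derived_sq n"
    by (rule derived_add)
  then have "qA n i i b + qA n i i b \<in> derived_sq n"
    by (simp add: algebra_simps)
  then show "qA n i i b \<in> derived_sq n"
    by (rule derived_half)
qed

lemma qB_offdiag_in_derived:
  assumes "i < n" "j < n" "i \<noteq> j"
  shows "qB n i j a \<in> derived_sq n"
proof (rule additive_from_homogeneous[OF qB_add derived_add])
  fix p b assume b: "hom R0 R1 p b"
  have "mbr n p True (qA n i i b) (qB n i j 1) \<in> derived_sq n"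
    using assms b
    by (intro mbr_in_derived)
      (simp_all add: qA_sq_explicit qB_sq_explicit qA_mhom qB_mhom[of _ _ _ False, simplified] hom_one)
  then show "qB n i j b \<in> derived_sq n"
    by (simp add: mbr_qA_diag_qB assms b)
qed

lemma qB_diag_diff_in_derived:
  assumes "i < n" "j < n" "i \<noteq> j"
  shows "qB n i i a - qB n j j a \<in> derived_sq n"
proof (rule additive_from_homogeneous[where f = "\<lambda>a. qB n i i a - qB n j j a", OF _ derived_add])
  show "qB n i i (a + b) - qB n j j (a + b) = (qB n i i a - qB n j j a) + (qB n i i b - qB n j j b)" for a b
    by (simp add: qB_add)
next
  fix p b assume b: "hom R0 R1 p b"
  have "mbr n p True (qA n i j b) (qB n j i 1) \<in> derived_sq n"
    using assms b
    by (intro mbr_in_derived)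
      (simp_all add: qA_sq_explicit qB_sq_explicit qA_mhom qB_mhom[of _ _ _ False, simplified] hom_one)
  then show "qB n i i b - qB n j j b \<in> derived_sq n"
    using mbr_qA_qB[OF assms b hom_one] by simp
qed

text \<open>The bracket below is \<open>qB n 0 0 (a b) \<plusminus> qB n 1 1 (b a)\<close>; moving the second term to
  position \<open>(0, 0)\<close> only costs a difference \<open>qB n 1 1 - qB n 0 0\<close>, which is already a sum of
  brackets.\<close>

lemma qB_scomm_in_derived:
  assumes "2 \<le> n" "hom R0 R1 p a" "hom R0 R1 q b"
  shows "qB n 0 0 (scomm p q a b) \<in> derived_sq n"
proof -
  have bracket: "mbr n p (\<not> q) (qA n 0 1 a) (qB n 1 0 b) \<in> derived_sq n"
    using assms by (intro mbr_in_derived) (simp_all add: qA_sq_explicit qB_sq_explicit qA_mhom qB_mhom)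
  have diag: "qB n 1 1 (b * a) - qB n 0 0 (b * a) \<in> derived_sq n"
    using assms(1) by (intro qB_diag_diff_in_derived) auto
  have table: "mbr n p (\<not> q) (qA n 0 1 a) (qB n 1 0 b) =
    (if p \<and> q then qB n 0 0 (a * b) + qB n 1 1 (b * a) else qB n 0 0 (a * b) - qB n 1 1 (b * a))"
    using assms by (intro mbr_qA_qB) auto
  show ?thesis
  proof (cases "p \<and> q")
    case True
    then have "qB n 0 0 (scomm p q a b) =
        mbr n p (\<not> q) (qA n 0 1 a) (qB n 1 0 b) - (qB n 1 1 (b * a) - qB n 0 0 (b * a))"
      unfolding table by (simp add: scomm_def qB_add)
    with bracket diag show ?thesis by (simp add: derived_diff)
  next
    case False
    then have "qB n 0 0 (scomm p q a b) =
        mbr n p (\<not> q) (qA n 0 1 a) (qB n 1 0 b) + (qB n 1 1 (b * a) - qB n 0 0 (b * a))"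
      unfolding table using False by (auto simp: scomm_def qB_diff)
    with bracket diag show ?thesis by (simp add: derived_add)
  qed
qed

lemma qB_commR_in_derived:
  assumes "2 \<le> n" "c \<in> commR sm R0 R1"
  shows "qB n 0 0 c \<in> derived_sq n"
proof -
  have "commR sm R0 R1 \<subseteq> {c. qB n 0 0 c \<in> derived_sq n}"
    unfolding commR_def
    by (rule kspan_least)
      (auto simp: qB_scomm_in_derived assms(1) derived_zero qB_add derived_add qB_sm derived_mat_act)
  with assms(2) show ?thesis by blast
qed

lemma qn_expansion:
  assumes "X \<in> qn R0 R1 n"
  shows "X = (\<Sum>i<n. \<Sum>j<n. qA n i j (X i j) + qB n i j (X i (j + n)))"
proof (intro ext)
  fix k l
  have "(\<Sum>i<n. \<Sum>j<n. qA n i j (X i j) + qB n i j (X i (j + n))) k l =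
     (if k < n \<and> l < n then X k l else 0) +
     (if n \<le> k \<and> k < n + n \<and> n \<le> l \<and> l < n + n then \<rho> (X (k - n) (l - n)) else 0) +
     ((if k < n \<and> n \<le> l \<and> l < n + n then X k (l - n + n) else 0) +
      (if n \<le> k \<and> k < n + n \<and> l < n then \<rho> (X (k - n) (l + n)) else 0))"
    by (simp add: sum_fun_apply qA_apply qB_apply sum.distrib
        sum_sum_delta_shift[where u = 0 and v = 0, simplified]
        sum_sum_delta_shift[where u = 0 and v = n, simplified]
        sum_sum_delta_shift[where u = n and v = 0, simplified]
        sum_sum_delta_shift[where u = n and v = n, simplified])
  also have "\<dots> = X k l"
  proof -
    have "X k l = \<rho> (X (k - n) (l - n))" if "n \<le> k" "k < n + n" "n \<le> l" "l < n + n"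
      using qnD(2)[OF assms, of "k - n" "l - n"] that by simp
    moreover have "X k l = \<rho> (X (k - n) (l + n))" if "n \<le> k" "k < n + n" "l < n"
      using qnD(3)[OF assms, of "k - n" l] that by simp
    ultimately show ?thesis using qnD(1)[OF assms] by (auto simp: gl_def mult_2)
  qed
  finally show "X k l = (\<Sum>i<n. \<Sum>j<n. qA n i j (X i j) + qB n i j (X i (j + n))) k l" by simp
qed

lemma sq_explicit_subset_derived:
  assumes "2 \<le> n"
  shows "sq_explicit n \<subseteq> derived_sq n"
proof
  fix X assume "X \<in> sq_explicit n"
  then have X: "X \<in> qn R0 R1 n" and tr: "qtr n X \<in> commR sm R0 R1"
    unfolding sq_explicit_def by auto
  txt \<open>Each diagonal \<open>B\<close>-entry is moved to position \<open>(0, 0)\<close>, where the trace accumulates.\<close>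
  define F where "F i j = qA n i j (X i j) + qB n i j (X i (j + n)) -
    (if i = j then qB n 0 0 (X i (i + n)) else 0)" for i j
  have diag_diff: "qB n i i y - qB n 0 0 y \<in> derived_sq n" if "i < n" for i y
    using that by (cases "i = 0") (simp_all add: derived_zero qB_diag_diff_in_derived)
  have "F i j \<in> derived_sq n" if "i < n" "j < n" for i j
  proof (cases "i = j")
    case True
    then have "F i j = qA n i i (X i i) + (qB n i i (X i (i + n)) - qB n 0 0 (X i (i + n)))"
      by (simp add: F_def)
    then show ?thesis using that assms by (simp add: qA_diag_in_derived diag_diff derived_add)
  next
    case False
    then show ?thesis
      using that by (simp add: F_def qA_offdiag_in_derived qB_offdiag_in_derived derived_add)
  qed
  then have "(\<Sum>i<n. \<Sum>j<n. F i j) + qB n 0 0 (qtr n X) \<in> derived_sq n"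
    by (intro derived_add derived_sum qB_commR_in_derived assms tr) auto
  moreover have "(\<Sum>i<n. \<Sum>j<n. (if i = j then qB n 0 0 (X i (i + n)) else 0)) = qB n 0 0 (qtr n X)"
    by (simp add: qtr_def qB_sum)
  then have "(\<Sum>i<n. \<Sum>j<n. F i j) =
      (\<Sum>i<n. \<Sum>j<n. qA n i j (X i j) + qB n i j (X i (j + n))) - qB n 0 0 (qtr n X)"
    by (simp add: F_def sum_subtractf)
  then have "(\<Sum>i<n. \<Sum>j<n. F i j) + qB n 0 0 (qtr n X) = X"
    by (simp only: qn_expansion[OF X, symmetric]) simp
  ultimately show "X \<in> derived_sq n" by simp
qed

end

theorem corollary2p2:
  fixes sm :: "'k::comm_ring_1 \<Rightarrow> 'r::ring_1 \<Rightarrow> 'r"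
    and R0 R1 :: "'r set" and n :: nat
  assumes "superalg sm R0 R1" and "2 \<le> n"
  shows "derived sm R0 R1 n (sqn sm R0 R1 n) = sqn sm R0 R1 n \<and>
         sqn sm R0 R1 n = {X \<in> qn R0 R1 n. (\<Sum>i<n. X i (i + n)) \<in> commR sm R0 R1}"
proof -
  interpret superalgebra sm R0 R1 by (rule superalgebra.intro) (rule assms(1))
  have sq_qn: "sq_explicit n \<subseteq> qn R0 R1 n"
    by (auto simp: sq_explicit_def)
  have sq_derived: "derived_sq n \<subseteq> sqn sm R0 R1 n"
    unfolding sqn_def using sq_qn by (rule derived_mono)
  have sqn_eq: "sqn sm R0 R1 n = sq_explicit n"
    using derived_qn_subset sq_explicit_subset_derived[OF assms(2)] sq_derived
    unfolding sqn_def by blast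
  show ?thesis
    using sq_derived sq_explicit_subset_derived[OF assms(2)]
    unfolding sqn_eq by (auto simp: sq_explicit_def qtr_def)
qed

end
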